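(* Let $p,q\ge2$ be coprime integers, $c=c_{p,q}$, $t=-q/p$, and let $0<k,r<p$, $0<l,s<q$ be integers and $h\in\mathbb C$. Let $\sigma=\sum_{j_1\ge\dots\ge j_u\ge1,\ j_1+\dots+j_u=rs}\rho_{j_1,\dots,j_u}L_{-j_1}\cdots L_{-j_u}\in U(\mathfrak{vir})$ (with $\rho_{j_1,\dots,j_u}\in\mathbb C$) be such that $\sigma v$ is a nonzero singular vector of the Verma module $M^c_{h_{r,s}}$, $v$ its highest weight vector. Define $\rho(\lambda,\mu)\in\mathbb C$ by $\sigma f_0=\rho(\lambda,\mu)f_{rs}$ in the Witt-algebra module $\mathcal F_{\lambda,\mu}$, where each $L_{-j}$ acts as $l_{-j}$. If there exists a nonzero intertwining operator of type $\binom{L^c_h}{L^c_{h_{k,l}}\ L^c_{h_{r,s}}}$, then $$\rho\big(-h_{k,l},\ h_{r,s}-h-h_{k,l}\big)=0.$$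
   Context: The Virasoro algebra $\mathfrak{vir}=\bigoplus_{n\in\mathbb Z}\mathbb CL_n\oplus\mathbb CC$ has brackets $[L_n,L_m]=(n-m)L_{n+m}+\frac{n^3-n}{12}\delta_{n,-m}C$, $C$ central. $\mathrm{Vir}^c$ is the universal Virasoro vertex algebra of central charge $c$ (vacuum $\mathbf1$, $T=L_{-1}$, conformal vector $L_{-2}\mathbf1$ with field $\sum_nL_nz^{-n-2}$). The Verma module $M^c_h=U(\mathfrak{vir})\otimes_{U(\bigoplus_{n\ge0}\mathbb CL_n\oplus\mathbb CC)}\mathbb Cm$ ($Cm=cm$, $L_0m=hm$, $L_nm=0$, $n\ge1$); a singular vector is a vector $w$ with $L_nw=0$ for all $n>0$ and $L_0w\in\mathbb Cw$. $L^c_h$ is the unique irreducible quotient of $M^c_h$, a $\mathrm{Vir}^c$-module with $T=L_{-1}$. $c_{p,q}=1-\frac{6(p-q)^2}{pq}$, $h_{k,l}=\frac{(lp-kq)^2-(p-q)^2}{4pq}$. The Witt algebra is $\bigoplus_{n\in\mathbb Z}\mathbb Cl_n$ with $[l_n,l_m]=(n-m)l_{n+m}$; for $\lambda,\mu\in\mathbb C$, $\mathcal F_{\lambda,\mu}$ is the Witt module with basis $f_j$ ($j\in\mathbb Z$) and $l_{-i}f_j=(\mu+j-\lambda(i+1))f_{j+i}$. An intertwining operator of type $\binom{M_3}{M_1\ M_2}$ between $\mathrm{Vir}^c$-modules is a linear map $a\mapsto\mathcal Y(a,z)=\sum_{n\in\mathbb C}a_{(n)}z^{-n-1}$ from $M_1$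 to $\mathrm{Hom}(M_2,M_3[[z]]z^{-S})$ (for some $S\subset\mathbb C$ with $S+\mathbb Z=S$, $S/\mathbb Z$ finite; formal sums $\sum_nf_nz^n$ with $n$ in a finite union of sets $-d+\mathbb Z_{\ge0}$, $d\in S$) such that $T\mathcal Y(a,z)-\mathcal Y(a,z)T=\mathcal Y(Ta,z)=\partial_z\mathcal Y(a,z)$ and for all $v\in\mathrm{Vir}^c$, $a\in M_1$, $b\in M_2$, $n,m\in\mathbb Z$, $k'\in\mathbb C$: $\sum_{j\ge0}(-1)^j\binom nj\big(v_{(m+n-j)}a_{(k'+j)}b-(-1)^na_{(n+k'-j)}v_{(m+j)}b\big)=\sum_{j\ge0}\binom mj(v_{(n+j)}a)_{(m+k'-j)}b$. *)

theory Defs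
  imports Complex_Main "HOL-Library.Nonpos_Ints"
begin

definition cpq :: "nat \<Rightarrow> nat \<Rightarrow> complex" where
  "cpq p q = 1 - 6 * (of_nat p - of_nat q)^2 / (of_nat p * of_nat q)"

definition hpq :: "nat \<Rightarrow> nat \<Rightarrow> nat \<Rightarrow> nat \<Rightarrow> complex" where
  "hpq p q k l = ((of_nat l * of_nat p - of_nat k * of_nat q)^2 - (of_nat p - of_nat q)^2)
                 / (4 * of_nat p * of_nat q)"

text \<open>Partitions j_1 \<ge> ... \<ge> j_u \<ge> 1 (index lists of PBW monomials L_{-j_1}...L_{-j_u}).\<close>
definition is_part :: "nat list \<Rightarrow> bool" where
  "is_part J \<longleftrightarrow> sorted_wrt (\<ge>) J \<and> (\<forall>j\<in>set J. 1 \<le> j)"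

text \<open>Witt module F_{lam,mu}: elements are coefficient functions int => complex
  (f_j is the indicator of j).  l_n f_j = (mu + j + lam (n-1)) f_{j-n},
  i.e. l_{-i} f_j = (mu + j - lam (i+1)) f_{j+i}.\<close>
definition witt_l :: "complex \<Rightarrow> complex \<Rightarrow> int \<Rightarrow> (int \<Rightarrow> complex) \<Rightarrow> (int \<Rightarrow> complex)" where
  "witt_l lam mu n f = (\<lambda>k. (mu + of_int (k + n) + lam * of_int (n - 1)) * f (k + n))"

definition witt_basis :: "int \<Rightarrow> (int \<Rightarrow> complex)" where
  "witt_basis j = (\<lambda>k. if k = j then 1 else 0)"

definition witt_sigma :: "(nat list \<Rightarrow> complex) \<Rightarrow> complex \<Rightarrow> complex \<Rightarrow> (int \<Rightarrow> complex)" where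
  "witt_sigma rho lam mu =
     (\<lambda>k. \<Sum>J\<in>{J. rho J \<noteq> 0}. rho J * foldr (\<lambda>j f. witt_l lam mu (- int j) f) J (witt_basis 0) k)"

definition witt_rho :: "(nat list \<Rightarrow> complex) \<Rightarrow> nat \<Rightarrow> complex \<Rightarrow> complex \<Rightarrow> complex" where
  "witt_rho rho n lam mu = witt_sigma rho lam mu (int n)"

definition vir_module :: "complex \<Rightarrow> (complex \<Rightarrow> 'a::ab_group_add \<Rightarrow> 'a) \<Rightarrow> (int \<Rightarrow> 'a \<Rightarrow> 'a) \<Rightarrow> bool" where
  "vir_module c sc L \<longleftrightarrow> Vector_Spaces.vector_space sc \<and>
     (\<forall>n. Vector_Spaces.linear sc sc (L n)) \<and>
     (\<forall>n m w. L n (L m w) - L m (L n w) =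
        sc (of_int (n - m)) (L (n + m) w)
        + (if n = - m then sc ((of_int n ^ 3 - of_int n) / 12 * c) w else 0))"

definition word_act :: "(int \<Rightarrow> 'a \<Rightarrow> 'a) \<Rightarrow> nat list \<Rightarrow> 'a \<Rightarrow> 'a" where
  "word_act L J w = foldr (\<lambda>j x. L (- int j) x) J w"

definition sigma_act :: "(complex \<Rightarrow> 'a::ab_group_add \<Rightarrow> 'a) \<Rightarrow> (int \<Rightarrow> 'a \<Rightarrow> 'a)
    \<Rightarrow> (nat list \<Rightarrow> complex) \<Rightarrow> 'a \<Rightarrow> 'a" where
  "sigma_act sc L rho w = (\<Sum>J\<in>{J. rho J \<noteq> 0}. sc (rho J) (word_act L J w))"

definition singular_vec :: "(complex \<Rightarrow> 'a::ab_group_add \<Rightarrow> 'a) \<Rightarrow> (int \<Rightarrow> 'a \<Rightarrow> 'a) \<Rightarrow> 'a \<Rightarrow> bool" where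
  "singular_vec sc L w \<longleftrightarrow> (\<forall>n>0. L n w = 0) \<and> (\<exists>a. L 0 w = sc a w)"

definition is_verma :: "complex \<Rightarrow> complex \<Rightarrow> (complex \<Rightarrow> 'a::ab_group_add \<Rightarrow> 'a)
    \<Rightarrow> (int \<Rightarrow> 'a \<Rightarrow> 'a) \<Rightarrow> 'a \<Rightarrow> bool" where
  "is_verma c h sc L v \<longleftrightarrow> vir_module c sc L \<and> L 0 v = sc h v \<and> (\<forall>n>0. L n v = 0) \<and>
     module.span sc ((\<lambda>J. word_act L J v) ` {J. is_part J}) = UNIV \<and>
     \<not> module.dependent sc ((\<lambda>J. word_act L J v) ` {J. is_part J}) \<and>
     inj_on (\<lambda>J. word_act L J v) {J. is_part J}"

definition is_irr_hw :: "complex \<Rightarrow> complex \<Rightarrow> (complex \<Rightarrow> 'a::ab_group_add \<Rightarrow> 'a)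
    \<Rightarrow> (int \<Rightarrow> 'a \<Rightarrow> 'a) \<Rightarrow> bool" where
  "is_irr_hw c h sc L \<longleftrightarrow> vir_module c sc L \<and>
     (\<exists>w. w \<noteq> 0 \<and> L 0 w = sc h w \<and> (\<forall>n>0. L n w = 0)) \<and>
     (\<forall>U. module.subspace sc U \<and> (\<forall>n. L n ` U \<subseteq> U) \<and> U \<noteq> {0} \<longrightarrow> U = UNIV)"

text \<open>Vir^c has PBW basis L_{-j_1}...L_{-j_u} 1 with j_1 \<ge> ... \<ge> j_u \<ge> 2; its elements are
  finitely supported coefficient functions on such lists.\<close>
definition virc_basis :: "nat list \<Rightarrow> bool" where
  "virc_basis J \<longleftrightarrow> sorted_wrt (\<ge>) J \<and> (\<forall>j\<in>set J. 2 \<le> j)"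

definition virc_elem :: "(nat list \<Rightarrow> complex) \<Rightarrow> bool" where
  "virc_elem v \<longleftrightarrow> finite {J. v J \<noteq> 0} \<and> (\<forall>J. v J \<noteq> 0 \<longrightarrow> virc_basis J)"

text \<open>Modes u_(n) of u = L_{-j_1}...L_{-j_u} 1 on a module, where omega_(k) = L_{k-1},
  1_(n) = delta_{n,-1} id, and (omega_(p) b)_(n) is given by the iterate formula
  sum_i (-1)^i (p choose i) (omega_(p-i) b_(n+i) - (-1)^p b_(p+n-i) omega_(i)),
  a sum with finitely many nonzero terms on each vector.\<close>
fun vmode :: "(complex \<Rightarrow> 'a::ab_group_add \<Rightarrow> 'a) \<Rightarrow> (int \<Rightarrow> 'a \<Rightarrow> 'a) \<Rightarrow> nat list \<Rightarrow> int \<Rightarrow> 'a \<Rightarrow> 'a" where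
  "vmode sc L [] n w = (if n = -1 then w else 0)"
| "vmode sc L (j # J) n w =
     (let p = 1 - int j;
          T = (\<lambda>i::nat. sc ((-1) ^ i * ((of_int p :: complex) gchoose i))
                 (L (p - int i - 1) (vmode sc L J (n + int i) w)
                  - sc ((-1) powi p) (vmode sc L J (p + n - int i) (L (int i - 1) w))))
      in \<Sum>i\<in>{i. T i \<noteq> 0}. T i)"

definition vop :: "(complex \<Rightarrow> 'a::ab_group_add \<Rightarrow> 'a) \<Rightarrow> (int \<Rightarrow> 'a \<Rightarrow> 'a)
    \<Rightarrow> (nat list \<Rightarrow> complex) \<Rightarrow> int \<Rightarrow> 'a \<Rightarrow> 'a" where
  "vop sc L v n w = (\<Sum>J\<in>{J. v J \<noteq> 0}. sc (v J) (vmode sc L J n w))"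

text \<open>Y a n b is the coefficient a_(n) b (n complex) of Y(a,z)b = sum_n a_(n) b z^{-n-1}.\<close>
definition intertwining ::
  "complex \<Rightarrow> (complex \<Rightarrow> 'a::ab_group_add \<Rightarrow> 'a) \<Rightarrow> (int \<Rightarrow> 'a \<Rightarrow> 'a)
   \<Rightarrow> (complex \<Rightarrow> 'b::ab_group_add \<Rightarrow> 'b) \<Rightarrow> (int \<Rightarrow> 'b \<Rightarrow> 'b)
   \<Rightarrow> (complex \<Rightarrow> 'c::ab_group_add \<Rightarrow> 'c) \<Rightarrow> (int \<Rightarrow> 'c \<Rightarrow> 'c)
   \<Rightarrow> ('a \<Rightarrow> complex \<Rightarrow> 'b \<Rightarrow> 'c) \<Rightarrow> bool" where
  "intertwining c sc1 L1 sc2 L2 sc3 L3 Y \<longleftrightarrow>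
     (\<forall>n b. Vector_Spaces.linear sc1 sc3 (\<lambda>a. Y a n b)) \<and>
     (\<forall>a n. Vector_Spaces.linear sc2 sc3 (\<lambda>b. Y a n b)) \<and>
     (\<exists>S F. (\<forall>d\<in>S. d + 1 \<in> S \<and> d - 1 \<in> S) \<and> finite F \<and>
            S \<subseteq> {d + of_int m | d m. d \<in> F} \<and>
            (\<forall>a b. \<exists>D. finite D \<and> D \<subseteq> S \<and>
               (\<forall>n. Y a n b \<noteq> 0 \<longrightarrow> (\<exists>d\<in>D. \<exists>i::nat. - n - 1 = - d + of_nat i)))) \<and>
     (\<forall>a n b. L3 (-1) (Y a n b) - Y a n (L2 (-1) b) = Y (L1 (-1) a) n b) \<and>
     (\<forall>a n b. Y (L1 (-1) a) n b = sc3 (- n) (Y a (n - 1) b)) \<and>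
     (\<forall>v a b (n::int) (m::int) k'. virc_elem v \<longrightarrow>
        (let T1 = (\<lambda>j::nat. sc3 ((-1) ^ j * ((of_int n :: complex) gchoose j))
                     (vop sc3 L3 v (m + n - int j) (Y a (k' + of_nat j) b)
                      - sc3 ((-1) powi n) (Y a (of_int n + k' - of_nat j) (vop sc2 L2 v (m + int j) b))));
             T2 = (\<lambda>j::nat. sc3 ((of_int m :: complex) gchoose j)
                     (Y (vop sc1 L1 v (n + int j) a) (of_int m + k' - of_nat j) b))
         in (\<Sum>j\<in>{j. T1 j \<noteq> 0}. T1 j) = (\<Sum>j\<in>{j. T2 j \<noteq> 0}. T2 j)))"

end

theory Submission
  imports Defs "HOL-Library.Product_Plus"
begin

text \<open>A nonzero intertwining operator Y has a nonzero mode w1_(k) w2 on the highest weight vectors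
  w1, w2: the vectors annihilated by all modes form submodules, so irreducibility applies twice.
  Lower truncation then yields a top such mode y = w1_(k) w2. For the primary field w1 the Jacobi
  identity with \<omega> = L_{-2} 1 gives [L_n, w1_(k)] = ((n+1) h1 - (n+1) - k) w1_(n+k). Hence y is a
  highest weight vector of weight h2 + h1 - 1 - k, which forces h = h2 + h1 - 1 - k, and
  w1_(k+|J|) L_{-J} w2 is the coefficient of L_{-J} f_0 in the Witt module F_{-h1, k+1-2h1} times y.
  Finally the singular vector \<sigma> v maps to zero in the irreducible quotient of highest weight
  h_{r,s}, so applying w1_(k+rs) to \<sigma> w2 = 0 gives \<rho>(-h1, h2 - h - h1) y = 0.\<close>

section \<open>Highest weight vectors of irreducible modules\<close>

definition vir_irreducible :: "(complex \<Rightarrow> 'a::ab_group_add \<Rightarrow> 'a) \<Rightarrow> (int \<Rightarrow> 'a \<Rightarrow> 'a) \<Rightarrow> bool" where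
  "vir_irreducible sc L \<longleftrightarrow>
     (\<forall>U. module.subspace sc U \<and> (\<forall>n. L n ` U \<subseteq> U) \<and> U \<noteq> {0} \<longrightarrow> U = UNIV)"

definition hw_vector :: "(complex \<Rightarrow> 'a::ab_group_add \<Rightarrow> 'a) \<Rightarrow> (int \<Rightarrow> 'a \<Rightarrow> 'a) \<Rightarrow> complex \<Rightarrow> 'a \<Rightarrow> bool" where
  "hw_vector sc L h w \<longleftrightarrow> w \<noteq> 0 \<and> L 0 w = sc h w \<and> (\<forall>n>0. L n w = 0)"

lemma is_irr_hw_iff:
  "is_irr_hw c h sc L \<longleftrightarrow> vir_module c sc L \<and> (\<exists>w. hw_vector sc L h w) \<and> vir_irreducible sc L"
  by (auto simp: is_irr_hw_def hw_vector_def vir_irreducible_def)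

locale vir_rep = vector_space sc
  for sc :: "complex \<Rightarrow> 'a::ab_group_add \<Rightarrow> 'a" +
  fixes L :: "int \<Rightarrow> 'a \<Rightarrow> 'a" and c :: complex
  assumes L_linear: "Vector_Spaces.linear sc sc (L n)"
    and L_bracket: "L n (L m w) - L m (L n w) = sc (of_int (n - m)) (L (n + m) w)
        + (if n = - m then sc ((of_int n ^ 3 - of_int n) / 12 * c) w else 0)"
begin

lemma L_hom: "module_hom sc sc (L n)"
  using L_linear[of n] by (simp add: linear_iff_module_hom)

lemma L_add: "L n (x + y) = L n x + L n y" using module_hom.add[OF L_hom] .
lemma L_scale: "L n (sc a x) = sc a (L n x)" using module_hom.scale[OF L_hom] .
lemma L_zero[simp]: "L n 0 = 0" using module_hom.zero[OF L_hom] .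
lemma L_sum: "L n (sum f A) = (\<Sum>a\<in>A. L n (f a))" using module_hom.sum[OF L_hom] .

lemma L_commute: "L n (L m w) = L m (L n w) + sc (of_int (n - m)) (L (n + m) w)
        + (if n = - m then sc ((of_int n ^ 3 - of_int n) / 12 * c) w else 0)"
  using L_bracket[of n m w] by (simp add: algebra_simps)

lemma hom_image_in_span:
  assumes "module_hom sc sc f" "f ` S \<subseteq> span T" "u \<in> span S"
  shows "f u \<in> span T"
proof -
  have "f u \<in> f ` span S" using assms(3) by blast
  also have "\<dots> = span (f ` S)" using module_hom.span_image[OF assms(1)] by simp
  also have "\<dots> \<subseteq> span T" using assms(2) by (metis span_mono span_span)
  finally show ?thesis .
qed

lemma word_act_Nil[simp]: "word_act L [] w = w"
  by (simp add: word_act_def)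

lemma word_act_Cons[simp]: "word_act L (j # J) w = L (- int j) (word_act L J w)"
  by (simp add: word_act_def)

lemma L0_word_act:
  assumes "L 0 w = sc e w"
  shows "L 0 (word_act L J w) = sc (e + of_nat (sum_list J)) (word_act L J w)"
proof (induction J)
  case Nil then show ?case by (simp add: assms)
next
  case (Cons j J)
  let ?x = "word_act L J w"
  have "L 0 (L (- int j) ?x) = L (- int j) (L 0 ?x) + sc (of_nat j) (L (- int j) ?x)"
    using L_commute[of 0 "- int j" ?x] by (cases "j = 0") auto
  also have "\<dots> = sc (e + of_nat (sum_list J)) (L (- int j) ?x) + sc (of_nat j) (L (- int j) ?x)"
    using Cons by (simp add: L_scale)
  also have "\<dots> = sc (e + of_nat (sum_list J) + of_nat j) (L (- int j) ?x)"
    by (simp only: scale_left_distrib)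
  finally show ?case by (simp add: add_ac)
qed

definition pbw_vectors :: "'a \<Rightarrow> 'a set" where
  "pbw_vectors w = (\<lambda>P. word_act L P w) ` {P. is_part P}"

definition pbw_vectors_bounded :: "'a \<Rightarrow> nat \<Rightarrow> nat \<Rightarrow> 'a set" where
  "pbw_vectors_bounded w d m =
     (\<lambda>P. word_act L P w) ` {P. is_part P \<and> sum_list P = d \<and> length P \<le> m}"

lemma span_pbw_vectors_bounded_mono:
  "m \<le> m' \<Longrightarrow> span (pbw_vectors_bounded w d m) \<subseteq> span (pbw_vectors_bounded w d m')"
  by (rule span_mono) (auto simp: pbw_vectors_bounded_def)

lemma span_pbw_vectors_bounded_subset: "span (pbw_vectors_bounded w d m) \<subseteq> span (pbw_vectors w)"
  by (rule span_mono) (auto simp: pbw_vectors_bounded_def pbw_vectors_def)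

lemma vector_in_span_pbw_vectors: "w \<in> span (pbw_vectors w)"
  by (rule span_base) (auto simp: pbw_vectors_def is_part_def intro: image_eqI[of _ _ "[]"])

lemma is_part_Cons: "is_part (a # Q) \<longleftrightarrow> (\<forall>x\<in>set Q. x \<le> a) \<and> 1 \<le> a \<and> is_part Q"
  by (auto simp: is_part_def)

text \<open>Straightening: L_{-a} L_{-q} \<dots> with q > a is reordered by the bracket, which produces
  either a word of the same length with a smaller tail or a shorter word.\<close>
lemma L_neg_pbw_vector:
  assumes "is_part Q" "1 \<le> a"
  shows "L (- int a) (word_act L Q w) \<in> span (pbw_vectors_bounded w (a + sum_list Q) (length Q + 1))"
  using assms
proof (induction Q arbitrary: a rule: wf_induct[OF wf_measures[of "[length, sum_list]"]])
  case (1 Q)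
  show ?case
  proof (cases "Q = [] \<or> hd Q \<le> a")
    case True
    then have "is_part (a # Q)" using 1 by (cases Q) (auto simp: is_part_Cons)
    then have "word_act L (a # Q) w \<in> pbw_vectors_bounded w (a + sum_list Q) (length Q + 1)"
      by (auto simp: pbw_vectors_bounded_def simp del: word_act_Cons)
    then show ?thesis by (simp add: span_base)
  next
    case False
    then obtain q Q' where Q: "Q = q # Q'" and qa: "\<not> q \<le> a" by (cases Q) auto
    let ?y = "word_act L Q' w"
    let ?T = "span (pbw_vectors_bounded w (a + sum_list Q) (length Q + 1))"
    have pQ': "is_part Q'" and q1: "1 \<le> q" using 1 Q by (auto simp: is_part_Cons)
    have lt: "(Q', Q) \<in> measures [length, sum_list]" using Q by simp
    have IH1: "L (- int a) ?y \<in> span (pbw_vectors_bounded w (a + sum_list Q') (length Q' + 1))"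
      using 1(1)[rule_format, OF lt pQ' 1(3)] .
    have T1: "L (- int q) (L (- int a) ?y) \<in> ?T"
    proof (rule hom_image_in_span[OF L_hom _ IH1], rule subsetI)
      fix z assume "z \<in> L (- int q) ` pbw_vectors_bounded w (a + sum_list Q') (length Q' + 1)"
      then obtain R where R: "is_part R" "sum_list R = a + sum_list Q'" "length R \<le> length Q' + 1"
        and z: "z = L (- int q) (word_act L R w)" by (auto simp: pbw_vectors_bounded_def)
      have "(R, Q) \<in> measures [length, sum_list]" using R Q qa by auto
      then have "z \<in> span (pbw_vectors_bounded w (q + sum_list R) (length R + 1))"
        using 1(1)[rule_format, OF _ R(1) q1] z by blast
      also have "\<dots> \<subseteq> ?T"
        using span_pbw_vectors_bounded_mono[of "length R + 1" "length Q + 1" w] R Q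
        by (simp add: add_ac)
      finally show "z \<in> ?T" .
    qed
    have "L (- int (a + q)) ?y \<in> span (pbw_vectors_bounded w (a + q + sum_list Q') (length Q' + 1))"
      using 1(1)[rule_format, OF lt pQ', of "a + q"] 1(3) by simp
    also have "\<dots> \<subseteq> ?T"
      using span_pbw_vectors_bounded_mono[of "length Q' + 1" "length Q + 1" w] Q by (auto simp: add_ac)
    finally have T2: "L (- int a - int q) ?y \<in> ?T" by (simp add: algebra_simps)
    have "L (- int a) (L (- int q) ?y) = L (- int q) (L (- int a) ?y)
        + sc (of_int (int q - int a)) (L (- int a - int q) ?y)"
      using L_commute[of "- int a" "- int q" ?y] 1(3) q1 by simp
    then show ?thesis using Q T1 T2 by (simp add: span_add span_scale)
  qed
qed

lemma L_neg_span_pbw_vectors: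
  assumes "1 \<le> a" "u \<in> span (pbw_vectors w)"
  shows "L (- int a) u \<in> span (pbw_vectors w)"
proof (rule hom_image_in_span[OF L_hom _ assms(2)])
  show "L (- int a) ` pbw_vectors w \<subseteq> span (pbw_vectors w)"
    using L_neg_pbw_vector[OF _ assms(1)] span_pbw_vectors_bounded_subset
    by (fastforce simp: pbw_vectors_def)
qed

lemma L_nonneg_pbw_vector:
  assumes "L 0 w = sc e w" "\<forall>n>0. L n w = 0"
  shows "is_part P \<Longrightarrow> 0 \<le> n \<Longrightarrow> L n (word_act L P w) \<in> span (pbw_vectors w)"
proof (induction P arbitrary: n)
  case Nil
  then show ?case
    using vector_in_span_pbw_vectors[of w] assms
    by (cases "n = 0") (auto simp: span_scale span_zero)
next
  case (Cons p P)
  let ?y = "word_act L P w"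
  have pP: "is_part P" and p1: "1 \<le> p" using Cons by (auto simp: is_part_Cons)
  have y: "?y \<in> span (pbw_vectors w)" by (rule span_base) (use pP in \<open>auto simp: pbw_vectors_def\<close>)
  have t1: "L (- int p) (L n ?y) \<in> span (pbw_vectors w)"
    using L_neg_span_pbw_vectors[OF p1] Cons.IH[OF pP Cons(3)] by blast
  have t2: "L (n - int p) ?y \<in> span (pbw_vectors w)"
  proof (cases "n - int p < 0")
    case True
    then have "L (n - int p) ?y = L (- int (nat (int p - n))) ?y" by simp
    then show ?thesis using L_neg_span_pbw_vectors[of "nat (int p - n)", OF _ y] True by simp
  next
    case False then show ?thesis using Cons.IH[OF pP] by simp
  qed
  have "L n (L (- int p) ?y) = L (- int p) (L n ?y) + sc (of_int (n + int p)) (L (n - int p) ?y)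
     + (if n = int p then sc ((of_int n ^ 3 - of_int n) / 12 * c) ?y else 0)"
    using L_commute[of n "- int p" ?y] by simp
  then show ?case using t1 t2 y by (simp add: span_add span_scale span_zero)
qed

lemma span_pbw_vectors_L_invariant:
  assumes "L 0 w = sc e w" "\<forall>n>0. L n w = 0" "u \<in> span (pbw_vectors w)"
  shows "L n u \<in> span (pbw_vectors w)"
proof (cases "n < 0")
  case True
  then have "L n u = L (- int (nat (- n))) u" by simp
  then show ?thesis using L_neg_span_pbw_vectors[of "nat (- n)", OF _ assms(3)] True by simp
next
  case False
  show ?thesis
  proof (rule hom_image_in_span[OF L_hom _ assms(3)])
    show "L n ` pbw_vectors w \<subseteq> span (pbw_vectors w)"
      using L_nonneg_pbw_vector[OF assms(1,2)] False by (auto simp: pbw_vectors_def)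
  qed
qed

lemma eigenvector_in_finite_span_zero:
  assumes f: "module_hom sc sc f" and "finite F"
    and F: "\<forall>x\<in>F. \<exists>e'. e' \<noteq> e \<and> f x = sc e' x"
  shows "\<forall>u\<in>span F. f u = sc e u \<longrightarrow> u = 0"
  using assms(2,3)
proof (induction F rule: finite_induct)
  case empty then show ?case by (simp add: span_empty)
next
  case (insert x F)
  show ?case
  proof (intro ballI impI)
    fix u assume u: "u \<in> span (insert x F)" and fu: "f u = sc e u"
    obtain k where z: "u - sc k x \<in> span F" using u span_breakdown_eq by blast
    obtain ex where ex: "ex \<noteq> e" "f x = sc ex x" using insert.prems by auto
    have fF: "f ` F \<subseteq> span F"
      using insert.prems by (metis (no_types, lifting) image_subsetI insertCI span_base span_scale)
    have "f u - sc ex u = f (u - sc k x) - sc ex (u - sc k x)"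
      using ex(2) module_hom.diff[OF f] module_hom.scale[OF f]
      by (simp add: scale_right_diff_distrib scale_left_commute[of ex k x])
    also have "\<dots> \<in> span F"
      using hom_image_in_span[OF f fF z] z by (simp add: span_diff span_scale)
    finally have z': "f u - sc ex u \<in> span F" .
    have "f (f u - sc ex u) = sc e (f u - sc ex u)"
      using fu module_hom.diff[OF f] module_hom.scale[OF f]
      by (simp add: scale_right_diff_distrib scale_left_commute[of ex e u])
    then have "f u - sc ex u = 0" using insert.IH insert.prems z' by auto
    then have "sc (e - ex) u = 0" using fu by (simp add: scale_left_diff_distrib)
    then show "u = 0" using ex(1) by simp
  qed
qed

lemma eigenvector_in_span_zero:
  assumes f: "module_hom sc sc f" and S: "\<forall>x\<in>S. \<exists>e'. e' \<noteq> e \<and> f x = sc e' x"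
    and u: "u \<in> span S" and fu: "f u = sc e u"
  shows "u = 0"
proof -
  obtain t r where t: "finite t" "t \<subseteq> S" and ueq: "u = (\<Sum>a\<in>t. sc (r a) a)"
    using u unfolding span_explicit by blast
  have "u \<in> span t" unfolding ueq by (intro span_sum span_scale span_base)
  then show ?thesis using eigenvector_in_finite_span_zero[OF f t(1)] S t(2) fu by blast
qed

text \<open>An irreducible module is spanned by the PBW vectors on any highest weight vector, and these
  are L_0-eigenvectors of weight e + N; eigenvectors for distinct eigenvalues being independent,
  every L_0-eigenvalue is of that form.\<close>
lemma irreducible_weight_above_hw:
  assumes "vir_irreducible sc L" "hw_vector sc L e y" "w \<noteq> 0" "L 0 w = sc h w"
  shows "\<exists>N::nat. h = e + of_nat N"
proof (rule ccontr)
  assume nN: "\<not> (\<exists>N::nat. h = e + of_nat N)"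
  have y: "y \<noteq> 0" "L 0 y = sc e y" "\<forall>n>0. L n y = 0" using assms(2) by (auto simp: hw_vector_def)
  have "span (pbw_vectors y) = UNIV"
    using assms(1) span_pbw_vectors_L_invariant[OF y(2,3)] vector_in_span_pbw_vectors[of y] y(1)
    unfolding vir_irreducible_def by blast
  moreover have "\<forall>x\<in>pbw_vectors y. \<exists>e'. e' \<noteq> h \<and> L 0 x = sc e' x"
    using L0_word_act[OF y(2)] nN by (auto simp: pbw_vectors_def) (metis of_nat_add add.assoc)
  ultimately show False using eigenvector_in_span_zero[OF L_hom[of 0], of "pbw_vectors y" h w] assms(3,4) by blast
qed

lemma irreducible_hw_weight_unique:
  assumes "vir_irreducible sc L" "hw_vector sc L e y" "hw_vector sc L h w"
  shows "e = h"
proof -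
  obtain N :: nat where N: "h = e + of_nat N"
    using irreducible_weight_above_hw[OF assms(1,2)] assms(3) by (auto simp: hw_vector_def)
  obtain M :: nat where M: "e = h + of_nat M"
    using irreducible_weight_above_hw[OF assms(1,3)] assms(2) by (auto simp: hw_vector_def)
  have "of_nat (N + M) = (0::complex)" using N M by (simp add: add_ac)
  then have "N = 0" by (simp only: of_nat_eq_0_iff)
  then show ?thesis using N by simp
qed

end

lemma vir_module_vir_rep: "vir_module c sc L \<Longrightarrow> vir_rep sc L c"
  unfolding vir_module_def vir_rep_def vir_rep_axioms_def by auto

section \<open>The universal property of the Verma module\<close>

definition scale_prod :: "(complex \<Rightarrow> 'a \<Rightarrow> 'a) \<Rightarrow> (complex \<Rightarrow> 'b \<Rightarrow> 'b) \<Rightarrow> complex \<Rightarrow> 'a \<times> 'b \<Rightarrow> 'a \<times> 'b" where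
  "scale_prod sc1 sc2 t z = (sc1 t (fst z), sc2 t (snd z))"

definition L_prod :: "(int \<Rightarrow> 'a \<Rightarrow> 'a) \<Rightarrow> (int \<Rightarrow> 'b \<Rightarrow> 'b) \<Rightarrow> int \<Rightarrow> 'a \<times> 'b \<Rightarrow> 'a \<times> 'b" where
  "L_prod L1 L2 n z = (L1 n (fst z), L2 n (snd z))"

lemma vir_rep_prod:
  assumes "vir_rep sc1 L1 c" "vir_rep sc2 L2 c"
  shows "vir_rep (scale_prod sc1 sc2) (L_prod L1 L2) c"
proof -
  interpret A: vir_rep sc1 L1 c by fact
  interpret B: vir_rep sc2 L2 c by fact
  interpret P: vector_space "scale_prod sc1 sc2"
    by unfold_locales (auto simp: scale_prod_def prod_eq_iff A.scale_right_distrib B.scale_right_distrib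
        A.scale_left_distrib B.scale_left_distrib)
  have "Vector_Spaces.linear (scale_prod sc1 sc2) (scale_prod sc1 sc2) (L_prod L1 L2 n)" for n
    unfolding Vector_Spaces.linear_iff
    by (auto simp: P.vector_space_axioms A.vector_space_axioms B.vector_space_axioms
        L_prod_def scale_prod_def prod_eq_iff A.L_add B.L_add A.L_scale B.L_scale)
  moreover have "L_prod L1 L2 n (L_prod L1 L2 m w) - L_prod L1 L2 m (L_prod L1 L2 n w) =
       scale_prod sc1 sc2 (of_int (n - m)) (L_prod L1 L2 (n + m) w) +
       (if n = - m then scale_prod sc1 sc2 ((of_int n ^ 3 - of_int n) / 12 * c) w else 0)" for n m w
    using A.L_bracket[of n m "fst w"] B.L_bracket[of n m "snd w"]
    by (cases "n = - m") (auto simp: L_prod_def scale_prod_def prod_eq_iff)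
  ultimately show ?thesis
    unfolding vir_rep_def vir_rep_axioms_def using P.vector_space_axioms by blast
qed

lemma word_act_L_prod: "word_act (L_prod L1 L2) J z = (word_act L1 J (fst z), word_act L2 J (snd z))"
  by (induction J) (auto simp: word_act_def L_prod_def)

text \<open>The graph of the linear map sending the PBW basis of the Verma module to the PBW vectors on
  w contains the cyclic submodule of the product generated by (v, w); since that submodule
  projects onto the whole Verma module, the graph is invariant under every L_n.\<close>
lemma verma_universal:
  fixes scM :: "complex \<Rightarrow> 'm::ab_group_add \<Rightarrow> 'm" and sc :: "complex \<Rightarrow> 'a::ab_group_add \<Rightarrow> 'a"
  assumes V: "is_verma c h scM LM vM" and N: "vir_module c sc L"
    and w: "L 0 w = sc h w" "\<forall>n>0. L n w = 0"
  shows "\<exists>\<Phi>. module_hom scM sc \<Phi> \<and> \<Phi> vM = w \<and> (\<forall>n x. \<Phi> (LM n x) = L n (\<Phi> x))"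
proof -
  have vmM: "vir_module c scM LM" and hwM: "LM 0 vM = scM h vM" "\<forall>n>0. LM n vM = 0"
    and spanM: "module.span scM ((\<lambda>J. word_act LM J vM) ` {J. is_part J}) = UNIV"
    and indep: "\<not> module.dependent scM ((\<lambda>J. word_act LM J vM) ` {J. is_part J})"
    and inj: "inj_on (\<lambda>J. word_act LM J vM) {J. is_part J}"
    using V by (auto simp: is_verma_def)
  interpret M: vir_rep scM LM c using vir_module_vir_rep[OF vmM] .
  interpret A: vir_rep sc L c using vir_module_vir_rep[OF N] .
  interpret P: vir_rep "scale_prod scM sc" "L_prod LM L" c using vir_rep_prod[OF M.vir_rep_axioms A.vir_rep_axioms] .
  interpret VP: vector_space_pair scM sc by unfold_locales
  let ?B = "(\<lambda>J. word_act LM J vM) ` {J. is_part J}"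
  define \<Phi> where "\<Phi> = VP.construct ?B (\<lambda>b. word_act L (inv_into {J. is_part J} (\<lambda>J. word_act LM J vM) b) w)"
  have hom: "module_hom scM sc \<Phi>"
    unfolding \<Phi>_def linear_iff_module_hom[symmetric] by (rule VP.linear_construct) (use indep in simp)
  have \<Phi>_word: "\<Phi> (word_act LM J vM) = word_act L J w" if "is_part J" for J
    unfolding \<Phi>_def using VP.construct_basis[OF indep] inv_into_f_f[OF inj] that by auto
  define G where "G = {z. snd z = \<Phi> (fst z)}"
  have "P.subspace G"
    unfolding P.subspace_def G_def
    using module_hom.zero[OF hom] module_hom.add[OF hom] module_hom.scale[OF hom]
    by (auto simp: scale_prod_def)
  then have span_G: "P.span (P.pbw_vectors (vM, w)) \<subseteq> G"
    by (rule P.span_minimal[rotated]) (auto simp: P.pbw_vectors_def word_act_L_prod G_def \<Phi>_word)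
  have fst_hom: "module_hom (scale_prod scM sc) scM fst"
    by unfold_locales (auto simp: scale_prod_def)
  have "fst ` P.span (P.pbw_vectors (vM, w)) = M.span (fst ` P.pbw_vectors (vM, w))"
    by (rule module_hom.span_image[OF fst_hom, symmetric])
  also have "fst ` P.pbw_vectors (vM, w) = M.pbw_vectors vM"
    by (simp add: P.pbw_vectors_def M.pbw_vectors_def word_act_L_prod image_image)
  finally have "fst ` P.span (P.pbw_vectors (vM, w)) = M.span (M.pbw_vectors vM)" .
  then have "fst ` P.span (P.pbw_vectors (vM, w)) = UNIV"
    using spanM by (simp add: M.pbw_vectors_def)
  then have lift: "\<exists>z\<in>P.span (P.pbw_vectors (vM, w)). fst z = x" for x
    by (metis UNIV_I imageE)
  have hwP: "L_prod LM L 0 (vM, w) = scale_prod scM sc h (vM, w)" "\<forall>n>0. L_prod LM L n (vM, w) = 0"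
    using hwM w by (auto simp: L_prod_def scale_prod_def zero_prod_def)
  have comm: "\<Phi> (LM n x) = L n (\<Phi> x)" for n x
  proof -
    obtain z where z: "z \<in> P.span (P.pbw_vectors (vM, w))" "fst z = x" using lift by blast
    have "L_prod LM L n z \<in> G"
      using span_G P.span_pbw_vectors_L_invariant[OF hwP z(1)] by blast
    moreover have "snd z = \<Phi> x" using span_G z unfolding G_def by blast
    ultimately show ?thesis using z(2) by (simp add: L_prod_def G_def)
  qed
  have "\<Phi> vM = w" using \<Phi>_word[of "[]"] by (simp add: is_part_def)
  with hom comm show ?thesis by blast
qed

lemma hom_sigma_act:
  assumes "module_hom sc1 sc2 \<Phi>" "\<forall>n x. \<Phi> (L1 n x) = L2 n (\<Phi> x)"
  shows "\<Phi> (sigma_act sc1 L1 rho v) = sigma_act sc2 L2 rho (\<Phi> v)"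
proof -
  have "\<Phi> (word_act L1 J v) = word_act L2 J (\<Phi> v)" for J
    by (induction J) (auto simp: word_act_def assms(2))
  then show ?thesis
    by (simp add: sigma_act_def module_hom.sum[OF assms(1)] module_hom.scale[OF assms(1)])
qed

text \<open>The image of a singular vector of positive degree d is a singular vector of weight h + d,
  which cannot be nonzero in an irreducible module of highest weight h.\<close>
lemma singular_vector_vanishes_in_irreducible:
  fixes scM :: "complex \<Rightarrow> 'm::ab_group_add \<Rightarrow> 'm" and sc :: "complex \<Rightarrow> 'a::ab_group_add \<Rightarrow> 'a"
  assumes V: "is_verma c h scM LM vM" and N: "vir_module c sc L" "vir_irreducible sc L"
    and w: "hw_vector sc L h w"
    and rho: "\<forall>J. rho J \<noteq> 0 \<longrightarrow> sum_list J = d" and d: "1 \<le> d"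
    and sing: "singular_vec scM LM (sigma_act scM LM rho vM)"
  shows "sigma_act sc L rho w = 0"
proof (rule ccontr)
  interpret A: vir_rep sc L c using vir_module_vir_rep[OF N(1)] .
  assume nz: "sigma_act sc L rho w \<noteq> 0"
  have hw: "L 0 w = sc h w" "\<forall>n>0. L n w = 0" using w unfolding hw_vector_def by simp_all
  have "\<exists>\<Phi>. module_hom scM sc \<Phi> \<and> \<Phi> vM = w \<and> (\<forall>n x. \<Phi> (LM n x) = L n (\<Phi> x))"
    by (rule verma_universal[OF V N(1) hw])
  then obtain \<Phi> where \<Phi>: "module_hom scM sc \<Phi>" "\<Phi> vM = w" "\<forall>n x. \<Phi> (LM n x) = L n (\<Phi> x)"
    by (elim exE conjE)
  have img: "\<Phi> (sigma_act scM LM rho vM) = sigma_act sc L rho w"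
    using hom_sigma_act[OF \<Phi>(1,3)] \<Phi>(2) by simp
  have "L n (sigma_act sc L rho w) = 0" if "n > 0" for n
  proof -
    have "L n (sigma_act sc L rho w) = \<Phi> (LM n (sigma_act scM LM rho vM))"
      by (simp add: \<Phi>(3) img)
    also have "\<dots> = 0"
      using sing that module_hom.zero[OF \<Phi>(1)] by (simp add: singular_vec_def)
    finally show ?thesis .
  qed
  moreover have "L 0 (sigma_act sc L rho w) = sc (h + of_nat d) (sigma_act sc L rho w)"
  proof -
    have "L 0 (sigma_act sc L rho w) = (\<Sum>J\<in>{J. rho J \<noteq> 0}. sc (rho J) (L 0 (word_act L J w)))"
      unfolding sigma_act_def by (simp add: A.L_sum A.L_scale)
    also have "\<dots> = (\<Sum>J\<in>{J. rho J \<noteq> 0}. sc (h + of_nat d) (sc (rho J) (word_act L J w)))"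
      using w by (intro sum.cong) (auto simp: A.L0_word_act hw_vector_def rho mult.commute)
    also have "\<dots> = sc (h + of_nat d) (sigma_act sc L rho w)"
      unfolding sigma_act_def by (simp add: A.scale_sum_right)
    finally show ?thesis .
  qed
  ultimately have "hw_vector sc L (h + of_nat d) (sigma_act sc L rho w)"
    using nz by (simp add: hw_vector_def)
  then obtain K :: nat where "h = h + of_nat d + of_nat K"
    using A.irreducible_weight_above_hw[OF N(2)] w hw(1) unfolding hw_vector_def by blast
  then have "of_nat (d + K) = (0::complex)" by simp
  then show False using d by (simp only: of_nat_eq_0_iff)
qed

section \<open>The Witt module and the conformal vector\<close>

fun witt_coeff :: "complex \<Rightarrow> complex \<Rightarrow> nat list \<Rightarrow> complex" where
  "witt_coeff lam mu [] = 1"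
| "witt_coeff lam mu (j # J) = (mu + of_nat (sum_list J) - lam * (of_nat j + 1)) * witt_coeff lam mu J"

lemma witt_word_act_basis:
  "foldr (\<lambda>j f. witt_l lam mu (- int j) f) J (witt_basis 0) =
     (\<lambda>k. if k = int (sum_list J) then witt_coeff lam mu J else 0)"
proof (induction J)
  case Nil then show ?case by (rule ext) (simp add: witt_basis_def)
next
  case (Cons j J)
  then show ?case by (intro ext) (auto simp: witt_l_def algebra_simps)
qed

lemma witt_rho_eq_sum:
  assumes "\<forall>J. rho J \<noteq> 0 \<longrightarrow> sum_list J = d"
  shows "witt_rho rho d lam mu = (\<Sum>J\<in>{J. rho J \<noteq> 0}. rho J * witt_coeff lam mu J)"
  unfolding witt_rho_def witt_sigma_def witt_word_act_basis
  by (rule sum.cong) (use assms in auto)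

lemma gbinomial_minus_one: "((-1::complex) gchoose k) = (-1) ^ k"
  using gbinomial_minus[of "1::complex" k] binomial_gbinomial[of k k, where 'a=complex] by simp

lemma sum_nonzero_terms:
  assumes "finite F" "\<And>j. j \<notin> F \<Longrightarrow> T j = 0"
  shows "(\<Sum>j\<in>{j. T j \<noteq> 0}. T j) = (\<Sum>j\<in>F. T j)"
  by (rule sum.mono_neutral_left) (use assms in auto)

definition conformal_vector :: "nat list \<Rightarrow> complex" where
  "conformal_vector J = (if J = [2] then 1 else 0)"

lemma virc_elem_conformal_vector: "virc_elem conformal_vector"
  by (auto simp: virc_elem_def conformal_vector_def virc_basis_def)

context vir_rep
begin

lemma vmode_conformal: "vmode sc L [2] n w = L (n - 1) w"
proof -
  define T where "T = (\<lambda>i::nat. sc ((-1)^i * ((of_int (1 - int 2) :: complex) gchoose i))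
     (L ((1 - int 2) - int i - 1) (vmode sc L [] (n + int i) w)
      - sc ((-1) powi (1 - int 2)) (vmode sc L [] ((1 - int 2) + n - int i) (L (int i - 1) w))))"
  define i0 where "i0 = nat (if n \<ge> 0 then n else -1-n)"
  have T: "T i = (if i = i0 then L (n - 1) w else 0)" for i
  proof -
    have "(-1::complex)^i * ((of_int (1 - int 2) :: complex) gchoose i) = 1"
      by (simp add: gbinomial_minus_one power_mult_distrib[symmetric])
    moreover have "((-1::complex) powi (1 - int 2)) = -1" by (simp add: power_int_minus)
    ultimately show ?thesis unfolding T_def i0_def by (auto simp: algebra_simps)
  qed
  have "vmode sc L [2] n w = (\<Sum>i\<in>{i. T i \<noteq> 0}. T i)"
    by (simp only: vmode.simps Let_def T_def)
  also have "\<dots> = (\<Sum>i\<in>{i0}. T i)"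
    by (rule sum_nonzero_terms) (auto simp: T)
  finally show ?thesis by (simp add: T)
qed

lemma vop_conformal_vector: "vop sc L conformal_vector n w = L (n - 1) w"
proof -
  have "{J. conformal_vector J \<noteq> 0} = {[2]}" by (auto simp: conformal_vector_def)
  then show ?thesis
    unfolding vop_def by (simp add: vmode_conformal del: vmode.simps) (simp add: conformal_vector_def)
qed

end

section \<open>Intertwining operators among highest weight modules\<close>

locale vir_intertwiner =
  M1: vir_rep sc1 L1 c + M2: vir_rep sc2 L2 c + M3: vir_rep sc3 L3 c
  for sc1 :: "complex \<Rightarrow> 'a::ab_group_add \<Rightarrow> 'a" and L1
    and sc2 :: "complex \<Rightarrow> 'b::ab_group_add \<Rightarrow> 'b" and L2
    and sc3 :: "complex \<Rightarrow> 'c::ab_group_add \<Rightarrow> 'c" and L3 and c +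
  fixes Y :: "'a \<Rightarrow> complex \<Rightarrow> 'b \<Rightarrow> 'c"
  assumes intertwining: "intertwining c sc1 L1 sc2 L2 sc3 L3 Y"
begin

lemma Y_left_hom: "module_hom sc1 sc3 (\<lambda>a. Y a n b)"
  using intertwining by (simp add: intertwining_def linear_iff_module_hom)

lemma Y_right_hom: "module_hom sc2 sc3 (\<lambda>b. Y a n b)"
  using intertwining by (simp add: intertwining_def linear_iff_module_hom)

lemma Y_zero_left[simp]: "Y 0 n b = 0" using module_hom.zero[OF Y_left_hom] .
lemma Y_zero_right[simp]: "Y a n 0 = 0" using module_hom.zero[OF Y_right_hom] .
lemma Y_scale_left: "Y (sc1 t a) n b = sc3 t (Y a n b)" using module_hom.scale[OF Y_left_hom] .
lemma Y_scale_right: "Y a n (sc2 t b) = sc3 t (Y a n b)" using module_hom.scale[OF Y_right_hom] .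

lemma Y_lower_truncation:
  "\<exists>D. finite D \<and> (\<forall>n. Y a n b \<noteq> 0 \<longrightarrow> (\<exists>d\<in>D. \<exists>i::nat. - n - 1 = - d + of_nat i))"
  using intertwining unfolding intertwining_def by (metis (no_types, lifting))

lemma Y_L_minus_one: "Y (L1 (-1) a) n b = sc3 (- n) (Y a (n - 1) b)"
  using intertwining by (simp add: intertwining_def)

lemma Y_jacobi:
  assumes "virc_elem v"
  shows "(\<Sum>j\<in>{j. sc3 ((-1) ^ j * ((of_int n :: complex) gchoose j))
              (vop sc3 L3 v (m + n - int j) (Y a (k' + of_nat j) b)
               - sc3 ((-1) powi n) (Y a (of_int n + k' - of_nat j) (vop sc2 L2 v (m + int j) b))) \<noteq> 0}.
            sc3 ((-1) ^ j * ((of_int n :: complex) gchoose j))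
              (vop sc3 L3 v (m + n - int j) (Y a (k' + of_nat j) b)
               - sc3 ((-1) powi n) (Y a (of_int n + k' - of_nat j) (vop sc2 L2 v (m + int j) b))))
       = (\<Sum>j\<in>{j. sc3 ((of_int m :: complex) gchoose j)
              (Y (vop sc1 L1 v (n + int j) a) (of_int m + k' - of_nat j) b) \<noteq> 0}.
            sc3 ((of_int m :: complex) gchoose j)
              (Y (vop sc1 L1 v (n + int j) a) (of_int m + k' - of_nat j) b))"
  using intertwining assms unfolding intertwining_def Let_def by blast

text \<open>The Jacobi identity for \<omega> with n = 0 and m = n + 1; for a primary field only the terms
  j = 0 (giving L_{-1} a) and j = 1 (giving L_0 a) survive on the right.\<close>
lemma Y_commutator_primary:
  assumes a: "L1 0 a = sc1 h1 a" "\<forall>n>0. L1 n a = 0"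
  shows "L3 n (Y a k b) = Y a k (L2 n b)
      + sc3 ((of_int n + 1) * h1 - (of_int n + 1) - k) (Y a (of_int n + k) b)"
proof -
  define T1 where "T1 = (\<lambda>j::nat. sc3 ((-1) ^ j * ((of_int 0 :: complex) gchoose j))
                     (vop sc3 L3 conformal_vector ((n + 1) + 0 - int j) (Y a (k + of_nat j) b)
                      - sc3 ((-1) powi 0) (Y a (of_int 0 + k - of_nat j)
                          (vop sc2 L2 conformal_vector ((n + 1) + int j) b))))"
  define T2 where "T2 = (\<lambda>j::nat. sc3 ((of_int (n + 1) :: complex) gchoose j)
                     (Y (vop sc1 L1 conformal_vector (0 + int j) a) (of_int (n + 1) + k - of_nat j) b))"
  let ?y = "Y a (of_int n + k) b"
  have T1: "T1 j = (if j = 0 then L3 n (Y a k b) - Y a k (L2 n b) else 0)" for j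
    by (cases j) (auto simp: T1_def M3.vop_conformal_vector M2.vop_conformal_vector gbinomial_0_left)
  have T2: "T2 j = (if j = 0 then sc3 (- (of_int n + 1 + k)) ?y
       else if j = 1 then sc3 ((of_int n + 1) * h1) ?y else 0)" for j
  proof -
    consider "j = 0" | "j = 1" | "j \<ge> 2" by linarith
    then show ?thesis
    proof cases
      case 1 then show ?thesis by (simp add: T2_def M1.vop_conformal_vector Y_L_minus_one algebra_simps)
    next
      case 2 then show ?thesis using a(1) by (simp add: T2_def M1.vop_conformal_vector Y_scale_left algebra_simps)
    next
      case 3 then show ?thesis using a(2) by (simp add: T2_def M1.vop_conformal_vector)
    qed
  qed
  have "L3 n (Y a k b) - Y a k (L2 n b) = (\<Sum>j\<in>{j. T1 j \<noteq> 0}. T1 j)"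
    using sum_nonzero_terms[of "{0}" T1] by (simp add: T1)
  also have "\<dots> = (\<Sum>j\<in>{j. T2 j \<noteq> 0}. T2 j)"
    using Y_jacobi[OF virc_elem_conformal_vector, of 0 "n + 1" a k b] by (simp only: T1_def T2_def)
  also have "\<dots> = sc3 (- (of_int n + 1 + k)) ?y + sc3 ((of_int n + 1) * h1) ?y"
    using sum_nonzero_terms[of "{0, 1}" T2] by (simp add: T2)
  also have "\<dots> = sc3 ((of_int n + 1) * h1 - (of_int n + 1) - k) ?y"
    by (simp only: M3.scale_left_distrib[symmetric]) (simp add: algebra_simps)
  finally show ?thesis by (simp add: diff_eq_eq add.commute)
qed

text \<open>The Jacobi identity for \<omega> with m = 0 expresses (L_n a)_(k) through the modes of a.\<close>
lemma Y_annihilator_L_invariant: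
  assumes a: "\<forall>k b. Y a k b = 0"
  shows "Y (L1 n a) k b = 0"
proof -
  define T2 where "T2 = (\<lambda>j::nat. sc3 ((of_int 0 :: complex) gchoose j)
                     (Y (vop sc1 L1 conformal_vector ((n + 1) + int j) a) (of_int 0 + k - of_nat j) b))"
  have T2: "T2 j = (if j = 0 then Y (L1 n a) k b else 0)" for j
    by (cases j) (auto simp: T2_def M1.vop_conformal_vector gbinomial_0_left)
  have "Y (L1 n a) k b = (\<Sum>j\<in>{j. T2 j \<noteq> 0}. T2 j)"
    using sum_nonzero_terms[of "{0}" T2] by (simp add: T2)
  also have "\<dots> = 0"
    using Y_jacobi[OF virc_elem_conformal_vector, of "n + 1" 0 a k b] by (simp add: T2_def a M3.vop_conformal_vector)
  finally show ?thesis .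
qed

lemma exists_nonzero_mode_hw:
  assumes irr: "vir_irreducible sc1 L1" "vir_irreducible sc2 L2"
    and w1: "hw_vector sc1 L1 h1 w1" and w2: "hw_vector sc2 L2 h2 w2"
    and Y_nz: "Y a0 n0 b0 \<noteq> 0"
  shows "\<exists>k. Y w1 k w2 \<noteq> 0"
proof -
  have ex1: "\<exists>k b. Y w1 k b \<noteq> 0"
  proof (rule ccontr)
    let ?U = "{a. \<forall>k b. Y a k b = 0}"
    assume "\<not> (\<exists>k b. Y w1 k b \<noteq> 0)"
    then have "w1 \<in> ?U" by auto
    moreover have "M1.subspace ?U"
      unfolding M1.subspace_def using module_hom.add[OF Y_left_hom] by (auto simp: Y_scale_left)
    moreover have "\<forall>n. L1 n ` ?U \<subseteq> ?U" using Y_annihilator_L_invariant by blast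
    ultimately have "?U = UNIV" using irr(1) w1 unfolding vir_irreducible_def hw_vector_def by blast
    then show False using Y_nz by blast
  qed
  show ?thesis
  proof (rule ccontr)
    let ?U = "{b. \<forall>k. Y w1 k b = 0}"
    assume "\<not> (\<exists>k. Y w1 k w2 \<noteq> 0)"
    then have "w2 \<in> ?U" by auto
    moreover have "M2.subspace ?U"
      unfolding M2.subspace_def using module_hom.add[OF Y_right_hom] by (auto simp: Y_scale_right)
    moreover have "\<forall>n. L2 n ` ?U \<subseteq> ?U"
    proof (intro allI subsetI)
      fix n x assume "x \<in> L2 n ` ?U"
      then obtain b where b: "\<forall>k. Y w1 k b = 0" "x = L2 n b" by auto
      have "Y w1 k (L2 n b) = 0" for k
        using Y_commutator_primary[of w1 h1 n k b] w1 b(1) by (simp add: hw_vector_def)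
      then show "x \<in> ?U" using b(2) by simp
    qed
    ultimately have "?U = UNIV" using irr(2) w2 unfolding vir_irreducible_def hw_vector_def by blast
    then show False using ex1 by blast
  qed
qed

lemma exists_top_mode:
  assumes "Y a k0 b \<noteq> 0"
  shows "\<exists>k. Y a k b \<noteq> 0 \<and> (\<forall>n>0. Y a (k + of_nat n) b = 0)"
proof -
  obtain D where D: "finite D" "\<forall>n. Y a n b \<noteq> 0 \<longrightarrow> (\<exists>d\<in>D. \<exists>i::nat. - n - 1 = - d + of_nat i)"
    using Y_lower_truncation by blast
  define NS where "NS = {N::nat. Y a (k0 + of_nat N) b \<noteq> 0}"
  define B where "B = (\<Sum>d\<in>D. \<bar>Re d\<bar>)"
  have "NS \<subseteq> {..nat \<lceil>B - Re k0\<rceil>}"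
  proof
    fix N assume "N \<in> NS"
    then obtain d i where d: "d \<in> D" and di: "- (k0 + of_nat N) - 1 = - d + of_nat (i::nat)"
      using D(2) unfolding NS_def by blast
    have "real N = Re d - 1 - real i - Re k0"
      using arg_cong[OF di, of Re] by simp
    moreover have "Re d \<le> B"
      unfolding B_def using member_le_sum[of d D "\<lambda>d. \<bar>Re d\<bar>"] d D(1) by auto
    ultimately have "real N \<le> B - Re k0" by linarith
    then show "N \<in> {..nat \<lceil>B - Re k0\<rceil>}" by (simp add: le_nat_iff le_ceiling_iff)
  qed
  then have fin: "finite NS" using finite_subset by blast
  have "0 \<in> NS" using assms by (simp add: NS_def)
  then have top: "Max NS \<in> NS" using fin Max_in by blast
  show ?thesis
  proof (intro exI conjI allI impI)
    show "Y a (k0 + of_nat (Max NS)) b \<noteq> 0" using top by (simp add: NS_def)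
    fix n :: nat assume "n > 0"
    then have "Max NS + n \<notin> NS" using Max_ge[OF fin, of "Max NS + n"] by auto
    then show "Y a (k0 + of_nat (Max NS) + of_nat n) b = 0" by (simp add: NS_def add.assoc)
  qed
qed

lemma top_mode_hw_vector:
  assumes w1: "hw_vector sc1 L1 h1 w1" and w2: "hw_vector sc2 L2 h2 w2"
    and nz: "Y w1 k w2 \<noteq> 0" and top: "\<forall>n>0. Y w1 (k + of_nat n) w2 = 0"
  shows "hw_vector sc3 L3 (h2 + h1 - 1 - k) (Y w1 k w2)"
proof -
  have w1': "L1 0 w1 = sc1 h1 w1" "\<forall>n>0. L1 n w1 = 0"
    and w2': "L2 0 w2 = sc2 h2 w2" "\<forall>n>0. L2 n w2 = 0"
    using w1 w2 by (simp_all add: hw_vector_def)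
  note comm = Y_commutator_primary[OF w1']
  have "L3 n (Y w1 k w2) = 0" if "n > 0" for n
  proof -
    have "of_int n + k = k + of_nat (nat n)" using that by simp
    then show ?thesis
      using comm[of n k w2] w2' that top[rule_format, of "nat n"] by (simp add: add.commute)
  qed
  moreover have "L3 0 (Y w1 k w2) = sc3 (h2 + h1 - 1 - k) (Y w1 k w2)"
  proof -
    have "L3 0 (Y w1 k w2) = sc3 h2 (Y w1 k w2) + sc3 (h1 - 1 - k) (Y w1 k w2)"
      using comm[of 0 k w2] w2' by (simp add: Y_scale_right)
    also have "\<dots> = sc3 (h2 + h1 - 1 - k) (Y w1 k w2)"
      by (simp only: M3.scale_left_distrib[symmetric]) (simp add: algebra_simps)
    finally show ?thesis .
  qed
  ultimately show ?thesis using nz by (simp add: hw_vector_def)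
qed

text \<open>The factor mu + |J| - lam (j + 1) of the Witt module with lam = -h1, mu = k + 1 - 2 h1 is
  exactly the coefficient produced by commuting L_{-j} past w1_(k+|J|+j); all higher modes vanish.\<close>
lemma top_mode_word_act:
  assumes w1: "L1 0 w1 = sc1 h1 w1" "\<forall>n>0. L1 n w1 = 0"
    and top: "\<forall>n>0. Y w1 (k + of_nat n) w2 = 0"
    and J: "\<forall>j\<in>set J. 1 \<le> j"
  shows "Y w1 (k + of_nat (sum_list J) + of_nat N) (word_act L2 J w2)
      = sc3 (if N = 0 then witt_coeff (- h1) (k + 1 - 2 * h1) J else 0) (Y w1 k w2)"
  using J
proof (induction J arbitrary: N)
  case Nil
  then show ?case using top by (cases "N = 0") auto
next
  case (Cons j J)
  let ?X = "word_act L2 J w2" and ?k = "k + of_nat (sum_list (j # J)) + of_nat N"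
  have j1: "1 \<le> j" and IH: "\<And>N. Y w1 (k + of_nat (sum_list J) + of_nat N) ?X
      = sc3 (if N = 0 then witt_coeff (- h1) (k + 1 - 2 * h1) J else 0) (Y w1 k w2)"
    using Cons by auto
  let ?a = "(of_int (- int j) + 1) * h1 - (of_int (- int j) + 1) - ?k"
    and ?C = "witt_coeff (- h1) (k + 1 - 2 * h1)"
  have z: "Y w1 ?k ?X = 0"
    using IH[of "j + N"] j1 by (simp add: algebra_simps)
  have shift: "of_int (- int j) + ?k = k + of_nat (sum_list J) + of_nat N"
    by (simp add: algebra_simps)
  have "L3 (- int j) (Y w1 ?k ?X) = Y w1 ?k (L2 (- int j) ?X) + sc3 ?a (Y w1 (of_int (- int j) + ?k) ?X)"
    by (rule Y_commutator_primary[OF w1])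
  then have "Y w1 ?k (word_act L2 (j # J) w2) = - sc3 ?a (sc3 (if N = 0 then ?C J else 0) (Y w1 k w2))"
    unfolding z shift IH[of N] by (simp add: eq_neg_iff_add_eq_0)
  also have "\<dots> = sc3 (if N = 0 then ?C (j # J) else 0) (Y w1 k w2)"
  proof (cases "N = 0")
    case True
    have "- ?a * ?C J = ?C (j # J)" using True by (simp add: algebra_simps)
    then have "- sc3 ?a (sc3 (?C J) (Y w1 k w2)) = sc3 (?C (j # J)) (Y w1 k w2)"
      by (metis M3.scale_scale M3.scale_minus_left mult_minus_left)
    then show ?thesis by (simp only: if_P[OF True])
  qed simp
  finally show ?case .
qed

lemma witt_rho_vanishes:
  assumes irr: "vir_irreducible sc1 L1" "vir_irreducible sc2 L2" "vir_irreducible sc3 L3"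
    and w1: "hw_vector sc1 L1 h1 w1" and w2: "hw_vector sc2 L2 h2 w2" and w3: "hw_vector sc3 L3 h w3"
    and Y_nz: "Y a0 n0 b0 \<noteq> 0"
    and rho: "\<forall>J. rho J \<noteq> 0 \<longrightarrow> is_part J \<and> sum_list J = d"
    and sigma: "sigma_act sc2 L2 rho w2 = 0"
  shows "witt_rho rho d (- h1) (h2 - h - h1) = 0"
proof -
  obtain k0 where "Y w1 k0 w2 \<noteq> 0"
    using exists_nonzero_mode_hw[OF irr(1,2) w1 w2 Y_nz] by blast
  then obtain k where nz: "Y w1 k w2 \<noteq> 0" and top: "\<forall>n>0. Y w1 (k + of_nat n) w2 = 0"
    using exists_top_mode by blast
  have "h2 + h1 - 1 - k = h"
    using M3.irreducible_hw_weight_unique[OF irr(3) top_mode_hw_vector[OF w1 w2 nz top] w3] .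
  then have mu: "h2 - h - h1 = k + 1 - 2 * h1" by (simp add: algebra_simps)
  have w1': "L1 0 w1 = sc1 h1 w1" "\<forall>n>0. L1 n w1 = 0" using w1 by (simp_all add: hw_vector_def)
  have "0 = Y w1 (k + of_nat d) (sigma_act sc2 L2 rho w2)" using sigma by simp
  also have "\<dots> = (\<Sum>J\<in>{J. rho J \<noteq> 0}. sc3 (rho J) (Y w1 (k + of_nat d) (word_act L2 J w2)))"
    unfolding sigma_act_def by (simp add: module_hom.sum[OF Y_right_hom] Y_scale_right)
  also have "\<dots> = (\<Sum>J\<in>{J. rho J \<noteq> 0}. sc3 (rho J * witt_coeff (- h1) (k + 1 - 2 * h1) J) (Y w1 k w2))"
  proof (rule sum.cong)
    fix J assume "J \<in> {J. rho J \<noteq> 0}"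
    then have "is_part J" "sum_list J = d" using rho by auto
    then show "sc3 (rho J) (Y w1 (k + of_nat d) (word_act L2 J w2))
        = sc3 (rho J * witt_coeff (- h1) (k + 1 - 2 * h1) J) (Y w1 k w2)"
      using top_mode_word_act[OF w1' top, of J 0] by (simp add: is_part_def)
  qed simp
  also have "\<dots> = sc3 (witt_rho rho d (- h1) (h2 - h - h1)) (Y w1 k w2)"
    using witt_rho_eq_sum[of rho d] rho unfolding mu by (simp add: M3.scale_sum_left)
  finally show ?thesis using nz by simp
qed

end

theorem mainTheorem12:
  fixes p q k l r s :: nat and h :: complex
    and rho :: "nat list \<Rightarrow> complex"
    and scM :: "complex \<Rightarrow> 'm::ab_group_add \<Rightarrow> 'm" and LM :: "int \<Rightarrow> 'm \<Rightarrow> 'm" and vM :: 'm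
    and sc1 :: "complex \<Rightarrow> 'a::ab_group_add \<Rightarrow> 'a" and L1 :: "int \<Rightarrow> 'a \<Rightarrow> 'a"
    and sc2 :: "complex \<Rightarrow> 'b::ab_group_add \<Rightarrow> 'b" and L2 :: "int \<Rightarrow> 'b \<Rightarrow> 'b"
    and sc3 :: "complex \<Rightarrow> 'c::ab_group_add \<Rightarrow> 'c" and L3 :: "int \<Rightarrow> 'c \<Rightarrow> 'c"
  assumes "2 \<le> p" and "2 \<le> q" and "coprime p q"
    and "0 < k" and "k < p" and "0 < r" and "r < p"
    and "0 < l" and "l < q" and "0 < s" and "s < q"
    and "\<forall>J. rho J \<noteq> 0 \<longrightarrow> is_part J \<and> sum_list J = r * s"
    and "is_verma (cpq p q) (hpq p q r s) scM LM vM"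
    and "sigma_act scM LM rho vM \<noteq> 0"
    and "singular_vec scM LM (sigma_act scM LM rho vM)"
    and "is_irr_hw (cpq p q) (hpq p q k l) sc1 L1"
    and "is_irr_hw (cpq p q) (hpq p q r s) sc2 L2"
    and "is_irr_hw (cpq p q) h sc3 L3"
    and "\<exists>Y. intertwining (cpq p q) sc1 L1 sc2 L2 sc3 L3 Y \<and> (\<exists>a n b. Y a n b \<noteq> 0)"
  shows "witt_rho rho (r * s) (- hpq p q k l) (hpq p q r s - h - hpq p q k l) = 0"
proof -
  obtain Y a0 n0 b0 where Y: "intertwining (cpq p q) sc1 L1 sc2 L2 sc3 L3 Y" "Y a0 n0 b0 \<noteq> 0"
    using assms(19) by blast
  obtain w1 w2 w3 where
    M1: "vir_module (cpq p q) sc1 L1" "vir_irreducible sc1 L1" "hw_vector sc1 L1 (hpq p q k l) w1" and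
    M2: "vir_module (cpq p q) sc2 L2" "vir_irreducible sc2 L2" "hw_vector sc2 L2 (hpq p q r s) w2" and
    M3: "vir_module (cpq p q) sc3 L3" "vir_irreducible sc3 L3" "hw_vector sc3 L3 h w3"
    using assms(16-18) unfolding is_irr_hw_iff by blast
  interpret vir_intertwiner sc1 L1 sc2 L2 sc3 L3 "cpq p q" Y
    using M1(1) M2(1) M3(1) Y(1)
    by (simp add: vir_intertwiner_def vir_intertwiner_axioms_def vir_module_vir_rep)
  have "sigma_act sc2 L2 rho w2 = 0"
    using singular_vector_vanishes_in_irreducible[OF assms(13) M2, of rho "r * s"] assms(6,10,12,15)
    by simp
  then show ?thesis
    using witt_rho_vanishes[OF M1(2) M2(2) M3(2) M1(3) M2(3) M3(3) Y(2) assms(12)] by blast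
qed

end
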